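(* Let $L\in\mathbb{N}_{>0}$ and $N_{L+1}\in\mathbb{N}_{>0}$. The set of all sampled networks $\Phi\colon\mathcal{X}\to\mathbb{R}^{N_{L+1}}$ with $L$ hidden layers (of arbitrary widths $N_1,\dots,N_L$) and ReLU activation is dense in $C(\mathcal{X},\mathbb{R}^{N_{L+1}})$ with respect to the uniform norm on $\mathcal{X}$.
   Context: Input space: Fix $D\ge 1$ and use the Euclidean norm $\|\cdot\|$ and inner product $\langle\cdot,\cdot\rangle$ on $\mathbb{R}^D$. For $A\subseteq\mathbb{R}^D$ let $d(z,A)=\inf_{a\in A}\|z-a\|$, let the medial axis be $\mathrm{Med}(A)=\{z\in\mathbb{R}^D:\exists p\neq q\in A,\ \|p-z\|=\|q-z\|=d(z,A)\}$, and let the reach be $\tau_A=\inf_{a\in A}d(a,\mathrm{Med}(A))$. Let $\mathcal{X}'\subset\mathbb{R}^D$ be a nonempty compact set with reach $\tau_{\mathcal{X}'}>0$, fix $0<\epsilon_I<\min\{\tau_{\mathcal{X}'},1\}$, and set $\mathcal{X}=\{x\in\mathbb{R}^D: d(x,\mathcal{X}')\le\epsilon_I\}$. Networks: with $\phi(t)=\max\{t,0\}$, a network with $L$ hidden layers of widths $N_1,\dots,N_L$ ($N_0=D$) and output dimension $N_{L+1}$ has parameters $W_l\in\mathbb{R}^{N_l\times N_{l-1}}$, $b_l\in\mathbb{R}^{N_l}$, and computes $\Phi^{(0)}(x)=x$, $\Phi^{(l)}(x)=\phi(W_l\Phi^{(l-1)}(x)-b_l)$ ($\phi$ applied entrywise)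 for $l=1,\dots,L$, and $\Phi(x)=W_{L+1}\Phi^{(L)}(x)-b_{L+1}$. Write $w_{l,i}$ for the $i$-th row of $W_l$ and $b_{l,i}$ for the $i$-th entry of $b_l$. Sampled network (ReLU): $\Phi$ is a sampled network if for every $l=1,\dots,L$ and $i=1,\dots,N_l$ there are points $x^{(1)}_{0,i},x^{(2)}_{0,i}\in\mathcal{X}$ such that, with $x^{(j)}_{l-1,i}=\Phi^{(l-1)}(x^{(j)}_{0,i})$, we have $x^{(1)}_{l-1,i}\neq x^{(2)}_{l-1,i}$ and $w_{l,i}=\frac{x^{(2)}_{l-1,i}-x^{(1)}_{l-1,i}}{\|x^{(2)}_{l-1,i}-x^{(1)}_{l-1,i}\|^2}$, $b_{l,i}=\langle w_{l,i},x^{(1)}_{l-1,i}\rangle$. The output-layer parameters $W_{L+1},b_{L+1}$ are unrestricted (they are chosen to minimize a loss). *)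

theory Defs
  imports "HOL-Analysis.Analysis" "HOL-Library.Extended_Real"
begin

definition medial_axis :: "'a::euclidean_space set \<Rightarrow> 'a set" where
  "medial_axis A = {z. \<exists>p q. p \<in> A \<and> q \<in> A \<and> p \<noteq> q \<and>
      norm (p - z) = infdist z A \<and> norm (q - z) = infdist z A}"

text \<open>Reach, as an extended real (infinite when the medial axis is empty).\<close>
definition reach :: "'a::euclidean_space set \<Rightarrow> ereal" where
  "reach A = (INF a\<in>A. INF m\<in>medial_axis A. ereal (norm (a - m)))"

text \<open>Layer l (1 \<le> l) has width N l; its value at input x
  is the function i \<mapsto> \<Phi>^(l)(x)_i (only i < N l is meaningful).
  W1 i is the i-th row of the first weight matrix (a vector in the input space),
  W l i j is entry (i,j) of W_l for l \<ge> 2, b l i is the i-th bias of layer l.\<close>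
fun hid :: "(nat \<Rightarrow> nat) \<Rightarrow> (nat \<Rightarrow> 'a::euclidean_space) \<Rightarrow> (nat \<Rightarrow> nat \<Rightarrow> nat \<Rightarrow> real)
    \<Rightarrow> (nat \<Rightarrow> nat \<Rightarrow> real) \<Rightarrow> nat \<Rightarrow> 'a \<Rightarrow> nat \<Rightarrow> real" where
  "hid N W1 W b 0 x i = 0"
| "hid N W1 W b (Suc 0) x i = max (W1 i \<bullet> x - b 1 i) 0"
| "hid N W1 W b (Suc (Suc l)) x i =
     max ((\<Sum>j<N (Suc l). W (Suc (Suc l)) i j * hid N W1 W b (Suc l) x j) - b (Suc (Suc l)) i) 0"

definition sampled :: "'a::euclidean_space set \<Rightarrow> nat \<Rightarrow> (nat \<Rightarrow> nat) \<Rightarrow> (nat \<Rightarrow> 'a)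
    \<Rightarrow> (nat \<Rightarrow> nat \<Rightarrow> nat \<Rightarrow> real) \<Rightarrow> (nat \<Rightarrow> nat \<Rightarrow> real) \<Rightarrow> bool" where
  "sampled X L N W1 W b \<longleftrightarrow>
     (1 \<le> L \<longrightarrow> (\<forall>i<N 1. \<exists>x1\<in>X. \<exists>x2\<in>X. x1 \<noteq> x2 \<and>
         W1 i = (1 / (norm (x2 - x1))\<^sup>2) *\<^sub>R (x2 - x1) \<and> b 1 i = W1 i \<bullet> x1)) \<and>
     (\<forall>l\<in>{2..L}. \<forall>i<N l. \<exists>x1\<in>X. \<exists>x2\<in>X.
         (\<exists>j<N (l-1). hid N W1 W b (l-1) x1 j \<noteq> hid N W1 W b (l-1) x2 j) \<and>
         (\<forall>j<N (l-1). W l i j =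
            (hid N W1 W b (l-1) x2 j - hid N W1 W b (l-1) x1 j) /
            (\<Sum>k<N (l-1). (hid N W1 W b (l-1) x2 k - hid N W1 W b (l-1) x1 k)\<^sup>2)) \<and>
         b l i = (\<Sum>j<N (l-1). W l i j * hid N W1 W b (l-1) x1 j))"

definition net_out :: "nat \<Rightarrow> (nat \<Rightarrow> nat) \<Rightarrow> (nat \<Rightarrow> 'a::euclidean_space)
    \<Rightarrow> (nat \<Rightarrow> nat \<Rightarrow> nat \<Rightarrow> real) \<Rightarrow> (nat \<Rightarrow> nat \<Rightarrow> real)
    \<Rightarrow> ('m::finite \<Rightarrow> nat \<Rightarrow> real) \<Rightarrow> real ^ 'm \<Rightarrow> 'a \<Rightarrow> real ^ 'm" where
  "net_out L N W1 W b Wout bout x =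
     (\<chi> k. \<Sum>j<N L. Wout k j * hid N W1 W b L x j) - bout"

end

theory Submission
  imports Defs
begin

(* Only two properties of the epsI-neighbourhood X of X' are used: it is compact, and it is the
   closure of its interior.

   Fix an interior point z and use only first-layer neurons vanishing at z. A ramp
   x \<mapsto> max (a \<bullet> (x - y)) 0 with y interior is an affine combination of such neurons.
   Interpolating a Lipschitz g piecewise linearly at the knots a \<bullet> y, for a finite r-net of
   interior points y, approximates g (a \<bullet> x) uniformly on X, in particular exp (a \<bullet> x).
   Exponential sums form a point-separating algebra, so by Stone-Weierstrass one hidden layer is
   dense in C(X).

   For deeper layers, suppose the last hidden layer V vanishes at z. Then the sampled neuron from
   the pair (z, y) has zero bias and computes <V y, V x> / |V y|^2, which is nonnegative and so
   never clipped. If the points y range over a finite set whose images span V(X), every linear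
   functional of V(x) is a combination of these neurons (project its coefficient vector onto the
   span). Hence the targets remain affine readouts of the new layer, which again vanishes at z. *)

section \<open>Piecewise linear interpolation by ramps\<close>

definition relu_comb :: "real \<Rightarrow> (real \<times> real) list \<Rightarrow> real \<Rightarrow> real" where
  "relu_comb C ps t = C + (\<Sum>(c, p)\<leftarrow>ps. c * max (t - p) 0)"

lemma relu_comb_Nil [simp]: "relu_comb C [] t = C"
  by (simp add: relu_comb_def)

lemma relu_comb_append_ramp:
  "relu_comb C (ps @ [(s, m), (-s, b)]) t = relu_comb C ps t + s * max (t - m) 0 - s * max (t - b) 0"
  by (simp add: relu_comb_def)

lemma relu_comb_chord:
  fixes g :: "real \<Rightarrow> real"
  assumes lip: "\<And>t t'. \<bar>relu_comb C ps t - relu_comb C ps t'\<bar> \<le> K * \<bar>t - t'\<bar>"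
    and flat: "\<And>t. m \<le> t \<Longrightarrow> relu_comb C ps t = g m"
    and "m < b" and slope: "\<bar>g b - g m\<bar> \<le> K * (b - m)"
  defines "s \<equiv> (g b - g m) / (b - m)"
  defines "J \<equiv> relu_comb C (ps @ [(s, m), (-s, b)])"
  shows "\<And>t. t \<le> m \<Longrightarrow> J t = relu_comb C ps t" and "\<And>t. b \<le> t \<Longrightarrow> J t = g b"
    and "\<And>t t'. \<bar>J t - J t'\<bar> \<le> K * \<bar>t - t'\<bar>"
proof -
  define I where "I = relu_comb C ps"
  have "s * (b - m) = g b - g m" using \<open>m < b\<close> by (simp add: s_def)
  have "\<bar>s\<bar> \<le> K" using slope \<open>m < b\<close> by (simp add: s_def abs_divide divide_le_eq)
  have "0 \<le> K" using lip[of 1 0] by simp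
  \<comment> \<open>J follows I up to m, then the chord from (m, g m) to (b, g b), then stays constant.\<close>
  have J_eq: "J t = I (min t m) + s * (max m (min t b) - m)" for t
  proof -
    have "I t = I (min t m)" using flat[of t] flat[of m] by (cases "t \<le> m") (auto simp: I_def)
    then show ?thesis
      using \<open>m < b\<close> by (auto simp: J_def I_def relu_comb_append_ramp min_def max_def algebra_simps)
  qed
  show "J t = relu_comb C ps t" if "t \<le> m" for t
    using that by (simp add: J_eq I_def)
  show "J t = g b" if "b \<le> t" for t
    using that \<open>m < b\<close> flat[of m] \<open>s * (b - m) = g b - g m\<close> by (simp add: J_eq I_def)
  show "\<bar>J t - J t'\<bar> \<le> K * \<bar>t - t'\<bar>" for t t'
  proof -
    have split: "\<bar>min t m - min t' m\<bar> + \<bar>max m (min t b) - max m (min t' b)\<bar> \<le> \<bar>t - t'\<bar>"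
      using \<open>m < b\<close> by (simp add: min_def max_def abs_if)
    have "J t - J t' = (I (min t m) - I (min t' m)) + s * (max m (min t b) - max m (min t' b))"
      by (simp add: J_eq algebra_simps)
    then have "\<bar>J t - J t'\<bar> \<le> \<bar>I (min t m) - I (min t' m)\<bar> + \<bar>s\<bar> * \<bar>max m (min t b) - max m (min t' b)\<bar>"
      by (metis abs_mult abs_triangle_ineq)
    also have "\<dots> \<le> K * \<bar>min t m - min t' m\<bar> + K * \<bar>max m (min t b) - max m (min t' b)\<bar>"
      using lip \<open>\<bar>s\<bar> \<le> K\<close> by (intro add_mono mult_right_mono) (auto simp: I_def)
    also have "\<dots> \<le> K * \<bar>t - t'\<bar>"
      using split \<open>0 \<le> K\<close> by (simp add: distrib_left[symmetric] mult_left_mono)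
    finally show ?thesis .
  qed
qed

lemma relu_comb_interpolant:
  fixes g :: "real \<Rightarrow> real" and P :: "real set"
  assumes "finite P" and "P \<noteq> {}" and lip: "\<And>s t. \<bar>g s - g t\<bar> \<le> K * \<bar>s - t\<bar>"
  shows "\<exists>C ps. snd ` set ps \<subseteq> P \<and> (\<forall>q\<in>P. relu_comb C ps q = g q) \<and>
           (\<forall>s t. \<bar>relu_comb C ps s - relu_comb C ps t\<bar> \<le> K * \<bar>s - t\<bar>) \<and>
           (\<forall>t \<ge> Max P. relu_comb C ps t = g (Max P))"
  using assms(1,2)
proof (induction P rule: finite_linorder_max_induct)
  case empty
  then show ?case by simp
next
  case (insert b A)
  show ?case
  proof (cases "A = {}")
    case True
    then show ?thesis using lip[of 1 0] by (intro exI[of _ "g b"] exI[of _ "[]"]) auto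
  next
    case False
    obtain C ps where ps: "snd ` set ps \<subseteq> A" "\<forall>q\<in>A. relu_comb C ps q = g q"
        "\<forall>s t. \<bar>relu_comb C ps s - relu_comb C ps t\<bar> \<le> K * \<bar>s - t\<bar>"
        "\<forall>t \<ge> Max A. relu_comb C ps t = g (Max A)"
      using insert.IH[OF False] by blast
    define m where "m = Max A"
    have "m \<in> A" "m < b" using False insert.hyps by (auto simp: m_def)
    have "Max (insert b A) = b" using insert.hyps False by (auto intro!: Max_eqI)
    define ps' where "ps' = ps @ [((g b - g m) / (b - m), m), (- ((g b - g m) / (b - m)), b)]"
    note chord = relu_comb_chord[of C ps K m g b, folded ps'_def]
    have hyps: "\<And>t t'. \<bar>relu_comb C ps t - relu_comb C ps t'\<bar> \<le> K * \<bar>t - t'\<bar>"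
        "\<And>t. m \<le> t \<Longrightarrow> relu_comb C ps t = g m" "m < b" "\<bar>g b - g m\<bar> \<le> K * (b - m)"
      using ps(3,4) \<open>m < b\<close> lip[of b m] by (auto simp: m_def)
    have "relu_comb C ps' q = g q" if "q \<in> insert b A" for q
    proof (cases "q = b")
      case False
      then have "q \<in> A" "q \<le> m" using that insert.hyps(1) by (auto simp: m_def)
      then show ?thesis using ps(2) chord(1)[OF hyps] by simp
    qed (use chord(2)[OF hyps] in simp)
    moreover have "snd ` set ps' \<subseteq> insert b A" using ps(1) \<open>m \<in> A\<close> by (auto simp: ps'_def)
    ultimately show ?thesis
      using chord(2,3)[OF hyps] \<open>Max (insert b A) = b\<close> by (intro exI[of _ C] exI[of _ ps']) auto
  qed
qed

section \<open>Exponential sums\<close>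

inductive_set exp_sums :: "('a::real_inner \<Rightarrow> real) set" where
  exp_inner: "(\<lambda>x. exp (a \<bullet> x)) \<in> exp_sums"
| add: "f \<in> exp_sums \<Longrightarrow> g \<in> exp_sums \<Longrightarrow> (\<lambda>x. f x + g x) \<in> exp_sums"
| scale: "f \<in> exp_sums \<Longrightarrow> (\<lambda>x. c * f x) \<in> exp_sums"

lemma exp_sums_const: "(\<lambda>x. c) \<in> exp_sums"
  using exp_sums.scale[OF exp_sums.exp_inner[of 0], of c] by simp

lemma exp_sums_mult_exp:
  assumes "g \<in> exp_sums"
  shows "(\<lambda>x. exp (a \<bullet> x) * g x) \<in> exp_sums"
  using assms
proof induction
  case (exp_inner b)
  then show ?case using exp_sums.exp_inner[of "a + b"] by (simp add: inner_add_left exp_add)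
next
  case (add f g)
  then show ?case using exp_sums.add by (simp add: distrib_left)
next
  case (scale f c)
  then show ?case using exp_sums.scale[of _ c] by (simp add: mult.left_commute)
qed

lemma exp_sums_mult:
  assumes "f \<in> exp_sums" and "g \<in> exp_sums"
  shows "(\<lambda>x. f x * g x) \<in> exp_sums"
  using assms(1)
proof induction
  case (exp_inner a)
  then show ?case using exp_sums_mult_exp[OF assms(2)] .
next
  case (add f1 f2)
  then show ?case using exp_sums.add by (simp add: distrib_right)
next
  case (scale f c)
  then show ?case using exp_sums.scale[of _ c] by (simp add: mult.assoc)
qed

lemma exp_sums_continuous_on: "f \<in> exp_sums \<Longrightarrow> continuous_on S f"
  by (induction rule: exp_sums.induct) (auto intro!: continuous_intros)

lemma exp_min_lipschitz:
  fixes s t H :: real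
  shows "\<bar>exp (min s H) - exp (min t H)\<bar> \<le> exp H * \<bar>s - t\<bar>"
proof -
  have chord: "exp v - exp u \<le> exp H * (v - u)" if "u \<le> v" "v \<le> H" for u v :: real
  proof -
    have "exp v * (1 + (u - v)) \<le> exp v * exp (u - v)" by (intro mult_left_mono) auto
    then have "exp v - exp u \<le> exp v * (v - u)" by (simp add: exp_diff algebra_simps)
    also have "\<dots> \<le> exp H * (v - u)" using that by (intro mult_right_mono) auto
    finally show ?thesis .
  qed
  have "\<bar>min s H - min t H\<bar> \<le> \<bar>s - t\<bar>" by (simp add: min_def abs_if)
  then have "exp H * \<bar>min s H - min t H\<bar> \<le> exp H * \<bar>s - t\<bar>" by simp
  moreover have "\<bar>exp (min s H) - exp (min t H)\<bar> \<le> exp H * \<bar>min s H - min t H\<bar>"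
  proof (cases "min s H \<le> min t H")
    case True
    then show ?thesis using chord[of "min s H" "min t H"] by (simp add: abs_if)
  next
    case False
    then show ?thesis using chord[of "min t H" "min s H"] by (simp add: abs_if)
  qed
  ultimately show ?thesis by linarith
qed

section \<open>Gram representations of linear functionals\<close>

definition dot :: "nat \<Rightarrow> (nat \<Rightarrow> real) \<Rightarrow> (nat \<Rightarrow> real) \<Rightarrow> real" where
  "dot n u v = (\<Sum>j<n. u j * v j)"

lemma dot_commute: "dot n u v = dot n v u"
  by (simp add: dot_def mult.commute)

lemma dot_diff_left: "dot n (\<lambda>j. u j - v j) w = dot n u w - dot n v w"
  by (simp add: dot_def left_diff_distrib sum_subtractf)

lemma dot_scale_left: "dot n (\<lambda>j. k * u j) w = k * dot n u w"
  by (simp add: dot_def sum_distrib_left mult.assoc)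

lemma dot_add_right: "dot n u (\<lambda>j. v j + w j) = dot n u v + dot n u w"
  by (simp add: dot_def distrib_left sum.distrib)

lemma dot_sum_right: "dot n u (\<lambda>j. \<Sum>y\<in>Y. c y * V y j) = (\<Sum>y\<in>Y. c y * dot n u (V y))"
proof -
  have "dot n u (\<lambda>j. \<Sum>y\<in>Y. c y * V y j) = (\<Sum>j<n. \<Sum>y\<in>Y. c y * (u j * V y j))"
    by (simp add: dot_def sum_distrib_left mult.left_commute)
  also have "\<dots> = (\<Sum>y\<in>Y. c y * dot n u (V y))"
    by (subst sum.swap) (simp add: dot_def sum_distrib_left)
  finally show ?thesis .
qed

lemma dot_self_eq_0: "dot n u u = 0 \<Longrightarrow> j < n \<Longrightarrow> u j = 0"
  unfolding dot_def by (subst (asm) sum_nonneg_eq_0_iff) auto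

lemma dot_self_pos:
  assumes "j < n" and "u j \<noteq> 0"
  shows "0 < dot n u u"
proof -
  have "0 \<le> dot n u u" by (simp add: dot_def sum_nonneg)
  then show ?thesis using dot_self_eq_0[of n u j] assms by linarith
qed

lemma pivot_elimination_span:
  fixes V :: "'x \<Rightarrow> nat \<Rightarrow> real"
  assumes "V x0 n \<noteq> 0" and "finite Y" and "x0 \<notin> Y"
    and span: "\<forall>j<n. V x j - V x n / V x0 n * V x0 j = (\<Sum>y\<in>Y. e y * (V y j - V y n / V x0 n * V x0 j))"
  shows "\<exists>e'. \<forall>j<Suc n. V x j = (\<Sum>y\<in>insert x0 Y. e' y * V y j)"
proof -
  define ratio where "ratio y = V y n / V x0 n" for y
  define W where "W y j = V y j - ratio y * V x0 j" for y j
  have W: "W x j = (\<Sum>y\<in>Y. e y * W y j)" if "j < Suc n" for j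
    using span that \<open>V x0 n \<noteq> 0\<close> by (cases "j = n") (simp_all add: W_def ratio_def)
  define k where "k = ratio x - (\<Sum>y\<in>Y. e y * ratio y)"
  have "V x j = (\<Sum>y\<in>insert x0 Y. (e(x0 := k)) y * V y j)" if "j < Suc n" for j
  proof -
    have "(\<Sum>y\<in>Y. e y * W y j) = (\<Sum>y\<in>Y. e y * V y j) - (\<Sum>y\<in>Y. e y * ratio y) * V x0 j"
      by (simp add: W_def right_diff_distrib sum_subtractf sum_distrib_right mult.assoc)
    moreover have "V x j = W x j + ratio x * V x0 j" by (simp add: W_def)
    ultimately have "V x j = (\<Sum>y\<in>Y. e y * V y j) + k * V x0 j"
      using W[OF that] by (simp add: k_def algebra_simps)
    also have "(\<Sum>y\<in>Y. e y * V y j) = (\<Sum>y\<in>Y. (e(x0 := k)) y * V y j)"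
      using \<open>x0 \<notin> Y\<close> by (intro sum.cong) auto
    finally show ?thesis using \<open>x0 \<notin> Y\<close> \<open>finite Y\<close> by simp
  qed
  then show ?thesis by blast
qed

lemma finite_spanning_subset:
  fixes V :: "'x \<Rightarrow> nat \<Rightarrow> real"
  shows "\<exists>Y. finite Y \<and> Y \<subseteq> A \<and> (\<forall>y\<in>Y. \<exists>j<n. V y j \<noteq> 0) \<and>
           (\<forall>x\<in>A. \<exists>e. \<forall>j<n. V x j = (\<Sum>y\<in>Y. e y * V y j))"
proof (induction n arbitrary: V A)
  case 0
  show ?case by (intro exI[of _ "{}"]) auto
next
  case (Suc n)
  show ?case
  proof (cases "\<forall>x\<in>A. V x n = 0")
    case True
    obtain Y where Y: "finite Y" "Y \<subseteq> A" "\<forall>y\<in>Y. \<exists>j<n. V y j \<noteq> 0"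
        "\<forall>x\<in>A. \<exists>e. \<forall>j<n. V x j = (\<Sum>y\<in>Y. e y * V y j)"
      using Suc.IH[of A V] by blast
    have "\<exists>e. \<forall>j<Suc n. V x j = (\<Sum>y\<in>Y. e y * V y j)" if "x \<in> A" for x
    proof -
      obtain e where "\<forall>j<n. V x j = (\<Sum>y\<in>Y. e y * V y j)" using Y(4) \<open>x \<in> A\<close> by blast
      moreover have "V x n = (\<Sum>y\<in>Y. e y * V y n)"
        using True Y(2) \<open>x \<in> A\<close> by (simp add: subset_iff)
      ultimately have "\<forall>j<Suc n. V x j = (\<Sum>y\<in>Y. e y * V y j)" by (auto simp: less_Suc_eq)
      then show ?thesis by blast
    qed
    moreover have "\<exists>j<Suc n. V y j \<noteq> 0" if "y \<in> Y" for y
      using Y(3) that less_SucI by blast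
    ultimately show ?thesis using Y(1,2) by (intro exI[of _ Y]) simp
  next
    case False
    then obtain x0 where "x0 \<in> A" "V x0 n \<noteq> 0" by blast
    \<comment> \<open>Gaussian elimination of the last coordinate against the pivot x0.\<close>
    define W where "W y j = V y j - V y n / V x0 n * V x0 j" for y j
    obtain Y where Y: "finite Y" "Y \<subseteq> A - {x0}" "\<forall>y\<in>Y. \<exists>j<n. W y j \<noteq> 0"
        "\<forall>x\<in>A - {x0}. \<exists>e. \<forall>j<n. W x j = (\<Sum>y\<in>Y. e y * W y j)"
      using Suc.IH[of "A - {x0}" W] by blast
    have "\<exists>e. \<forall>j<n. W x j = (\<Sum>y\<in>Y. e y * W y j)" if "x \<in> A" for x
    proof (cases "x = x0")
      case True
      then show ?thesis using \<open>V x0 n \<noteq> 0\<close> by (intro exI[of _ "\<lambda>_. 0"]) (simp add: W_def)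
    qed (use Y(4) \<open>x \<in> A\<close> in blast)
    then have "\<exists>e. \<forall>j<Suc n. V x j = (\<Sum>y\<in>insert x0 Y. e y * V y j)" if "x \<in> A" for x
      using pivot_elimination_span[of V x0 n Y, OF \<open>V x0 n \<noteq> 0\<close> Y(1)] Y(2) that
      unfolding W_def by blast
    moreover have "\<exists>j<Suc n. V y j \<noteq> 0" if "y \<in> Y" for y
    proof (rule ccontr)
      assume "\<not> ?thesis"
      then have "W y j = 0" if "j < n" for j using that by (simp add: W_def)
      then show False using Y(3) \<open>y \<in> Y\<close> by blast
    qed
    moreover have "\<exists>j<Suc n. V x0 j \<noteq> 0" using \<open>V x0 n \<noteq> 0\<close> by blast
    ultimately show ?thesis
      using Y(1,2) \<open>x0 \<in> A\<close> by (intro exI[of _ "insert x0 Y"]) auto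
  qed
qed

lemma gram_schmidt_step:
  assumes r: "\<forall>y\<in>Y. dot n r (V y) = 0" and b': "\<forall>y\<in>Y. dot n b' (V y) = 0"
    and V_b: "V b = (\<lambda>j. b' j + (\<Sum>y\<in>Y. c y * V y j))"
  shows "\<forall>y\<in>insert b Y. dot n (\<lambda>j. r j - dot n r b' / dot n b' b' * b' j) (V y) = 0"
proof -
  define \<kappa> where "\<kappa> = dot n r b' / dot n b' b'"
  \<comment> \<open>If b' vanishes then so does dot n r b', and \<kappa> = 0 by the convention x / 0 = 0.\<close>
  have "dot n r b' = \<kappa> * dot n b' b'"
  proof (cases "dot n b' b' = 0")
    case True
    then have "b' j = 0" if "j < n" for j using dot_self_eq_0 that by blast
    then show ?thesis using True by (simp add: dot_def)
  qed (simp add: \<kappa>_def)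
  define \<rho> where "\<rho> = (\<lambda>j. r j - \<kappa> * b' j)"
  have \<rho>_Y: "dot n \<rho> (V y) = 0" if "y \<in> Y" for y
    using that r b' by (simp add: \<rho>_def dot_diff_left dot_scale_left)
  have "dot n \<rho> (V b) = dot n \<rho> b' + (\<Sum>y\<in>Y. c y * dot n \<rho> (V y))"
    unfolding V_b by (simp only: dot_add_right dot_sum_right)
  also have "\<dots> = 0"
    using \<rho>_Y \<open>dot n r b' = \<kappa> * dot n b' b'\<close> by (simp add: \<rho>_def dot_diff_left dot_scale_left dot_commute)
  finally show ?thesis using \<rho>_Y unfolding \<rho>_def \<kappa>_def by blast
qed

lemma orthogonal_residual_exists:
  fixes V :: "'x \<Rightarrow> nat \<Rightarrow> real"
  assumes "finite Y"
  shows "\<exists>c. \<forall>y'\<in>Y. dot n (\<lambda>j. d j - (\<Sum>y\<in>Y. c y * V y j)) (V y') = 0"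
  using assms
proof (induction Y arbitrary: d rule: finite_induct)
  case empty
  then show ?case by simp
next
  case (insert b Y)
  obtain c where c: "\<forall>y'\<in>Y. dot n (\<lambda>j. d j - (\<Sum>y\<in>Y. c y * V y j)) (V y') = 0"
    using insert.IH by blast
  obtain c\<^sub>b where c\<^sub>b: "\<forall>y'\<in>Y. dot n (\<lambda>j. V b j - (\<Sum>y\<in>Y. c\<^sub>b y * V y j)) (V y') = 0"
    using insert.IH by blast
  define b' where "b' = (\<lambda>j. V b j - (\<Sum>y\<in>Y. c\<^sub>b y * V y j))"
  define \<kappa> where "\<kappa> = dot n (\<lambda>j. d j - (\<Sum>y\<in>Y. c y * V y j)) b' / dot n b' b'"
  have "V b = (\<lambda>j. b' j + (\<Sum>y\<in>Y. c\<^sub>b y * V y j))" by (simp add: b'_def)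
  from gram_schmidt_step[OF c c\<^sub>b[folded b'_def] this]
  have orth: "\<forall>y'\<in>insert b Y. dot n (\<lambda>j. d j - (\<Sum>y\<in>Y. c y * V y j) - \<kappa> * b' j) (V y') = 0"
    by (simp add: \<kappa>_def)
  define c' where "c' = (\<lambda>y. c y - \<kappa> * c\<^sub>b y)(b := \<kappa>)"
  have "(\<lambda>j. d j - (\<Sum>y\<in>insert b Y. c' y * V y j)) = (\<lambda>j. d j - (\<Sum>y\<in>Y. c y * V y j) - \<kappa> * b' j)"
  proof
    fix j
    have "(\<Sum>y\<in>Y. c' y * V y j) = (\<Sum>y\<in>Y. c y * V y j - \<kappa> * (c\<^sub>b y * V y j))"
      using insert.hyps by (intro sum.cong) (auto simp: c'_def algebra_simps)
    then show "d j - (\<Sum>y\<in>insert b Y. c' y * V y j) = d j - (\<Sum>y\<in>Y. c y * V y j) - \<kappa> * b' j"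
      using insert.hyps by (simp add: c'_def b'_def sum_subtractf sum_distrib_left right_diff_distrib)
  qed
  then show ?case using orth by (intro exI[of _ c']) (simp only:)
qed

lemma linear_functional_gram_repr:
  fixes V :: "'x \<Rightarrow> nat \<Rightarrow> real"
  shows "\<exists>Y. finite Y \<and> Y \<subseteq> A \<and> (\<forall>y\<in>Y. \<exists>j<n. V y j \<noteq> 0) \<and>
           (\<forall>d. \<exists>c. \<forall>x\<in>A. dot n d (V x) = (\<Sum>y\<in>Y. c y * dot n (V y) (V x)))"
proof -
  obtain Y where Y: "finite Y" "Y \<subseteq> A" "\<forall>y\<in>Y. \<exists>j<n. V y j \<noteq> 0"
      "\<forall>x\<in>A. \<exists>e. \<forall>j<n. V x j = (\<Sum>y\<in>Y. e y * V y j)"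
    using finite_spanning_subset[where V = V and A = A and n = n] by blast
  have gram: "\<exists>c. \<forall>x\<in>A. dot n d (V x) = (\<Sum>y\<in>Y. c y * dot n (V y) (V x))" for d
  proof -
    obtain c where c: "\<forall>y'\<in>Y. dot n (\<lambda>j. d j - (\<Sum>y\<in>Y. c y * V y j)) (V y') = 0"
      using orthogonal_residual_exists[OF Y(1)] by blast
    have "dot n d (V x) = (\<Sum>y\<in>Y. c y * dot n (V y) (V x))" if "x \<in> A" for x
    proof -
      obtain e where e: "\<forall>j<n. V x j = (\<Sum>y\<in>Y. e y * V y j)" using Y(4) \<open>x \<in> A\<close> by blast
      have "dot n u (V x) = dot n u (\<lambda>j. \<Sum>y\<in>Y. e y * V y j)" for u
        using e by (simp add: dot_def)
      then have "dot n (\<lambda>j. d j - (\<Sum>y\<in>Y. c y * V y j)) (V x) = 0"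
        using c by (simp add: dot_sum_right)
      then have "dot n d (V x) = (\<Sum>y\<in>Y. c y * dot n (V x) (V y))"
        by (simp add: dot_diff_left dot_commute[of n "\<lambda>j. \<Sum>y\<in>Y. c y * V y j"] dot_sum_right)
      then show ?thesis by (simp add: dot_commute)
    qed
    then show ?thesis by blast
  qed
  show ?thesis using Y(1-3) gram by (intro exI[of _ Y]) blast
qed

section \<open>Sampled neurons and affine readouts\<close>

definition sampled_relu :: "'a::real_inner \<Rightarrow> 'a \<Rightarrow> 'a \<Rightarrow> real" where
  "sampled_relu x1 x2 x = max (((1 / (norm (x2 - x1))\<^sup>2) *\<^sub>R (x2 - x1)) \<bullet> (x - x1)) 0"

lemma sampled_relu_along:
  assumes "0 < t" and "a \<noteq> 0"
  shows "sampled_relu y (y + t *\<^sub>R a) x = max (a \<bullet> (x - y)) 0 / (t * (norm a)\<^sup>2)"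
proof -
  have "((1 / (norm (t *\<^sub>R a))\<^sup>2) *\<^sub>R (t *\<^sub>R a)) \<bullet> (x - y) = (a \<bullet> (x - y)) / (t * (norm a)\<^sup>2)"
    using assms by (simp add: power2_eq_square field_simps)
  moreover have "max (r / (t * (norm a)\<^sup>2)) 0 = max r 0 / (t * (norm a)\<^sup>2)" for r
    using assms by (auto simp: max_def field_simps)
  ultimately show ?thesis by (simp add: sampled_relu_def)
qed

definition relu_features :: "'a::real_inner \<Rightarrow> 'a \<times> 'a \<Rightarrow> real" where
  "relu_features x p = sampled_relu (fst p) (snd p) x"

definition affine_readout :: "'a set \<Rightarrow> ('a \<Rightarrow> 'i \<Rightarrow> real) \<Rightarrow> 'i set \<Rightarrow> ('a \<Rightarrow> real) \<Rightarrow> bool" where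
  "affine_readout X F I h \<longleftrightarrow> (\<exists>c D. \<forall>x\<in>X. h x = c + (\<Sum>i\<in>I. D i * F x i))"

lemma affine_readout_const: "affine_readout X F I (\<lambda>x. c)"
  unfolding affine_readout_def by (intro exI[of _ c] exI[of _ "\<lambda>_. 0"]) simp

lemma affine_readout_feature:
  assumes "finite I" and "i \<in> I"
  shows "affine_readout X F I (\<lambda>x. F x i)"
  unfolding affine_readout_def
  using assms by (intro exI[of _ 0] exI[of _ "\<lambda>j. of_bool (j = i)"]) (simp add: Int_absorb1)

lemma affine_readout_add:
  assumes "affine_readout X F I f" and "affine_readout X F I g"
  shows "affine_readout X F I (\<lambda>x. f x + g x)"
proof -
  obtain c D c' D' where "\<forall>x\<in>X. f x = c + (\<Sum>i\<in>I. D i * F x i)" "\<forall>x\<in>X. g x = c' + (\<Sum>i\<in>I. D' i * F x i)"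
    using assms unfolding affine_readout_def by blast
  then show ?thesis
    unfolding affine_readout_def
    by (intro exI[of _ "c + c'"] exI[of _ "\<lambda>i. D i + D' i"]) (simp add: distrib_right sum.distrib)
qed

lemma affine_readout_scale:
  assumes "affine_readout X F I f"
  shows "affine_readout X F I (\<lambda>x. r * f x)"
proof -
  obtain c D where "\<forall>x\<in>X. f x = c + (\<Sum>i\<in>I. D i * F x i)"
    using assms unfolding affine_readout_def by blast
  then show ?thesis
    unfolding affine_readout_def
    by (intro exI[of _ "r * c"] exI[of _ "\<lambda>i. r * D i"]) (simp add: distrib_left sum_distrib_left mult.assoc)
qed

lemma affine_readout_mono:
  assumes "affine_readout X F I h" and "I \<subseteq> J" and "finite J"
  shows "affine_readout X F J h"
proof -
  obtain c D where "\<forall>x\<in>X. h x = c + (\<Sum>i\<in>I. D i * F x i)"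
    using assms(1) unfolding affine_readout_def by blast
  moreover have "(\<Sum>i\<in>J. of_bool (i \<in> I) * (D i * F x i)) = (\<Sum>i\<in>I. D i * F x i)" for x
    using assms(2,3) by (simp add: Int_absorb1)
  ultimately show ?thesis
    unfolding affine_readout_def by (intro exI[of _ c] exI[of _ "\<lambda>i. of_bool (i \<in> I) * D i"]) (simp add: mult.assoc)
qed

lemma affine_readout_nth:
  assumes "affine_readout X F (set ps) h" and "distinct ps"
  shows "affine_readout X (\<lambda>x i. F x (ps ! i)) {..<length ps} h"
proof -
  obtain c D where "\<forall>x\<in>X. h x = c + (\<Sum>p\<in>set ps. D p * F x p)"
    using assms(1) unfolding affine_readout_def by blast
  moreover have "(\<Sum>p\<in>set ps. D p * F x p) = (\<Sum>i<length ps. D (ps ! i) * F x (ps ! i))" for x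
    using assms(2) by (simp add: sum.distinct_set_conv_list sum_list_sum_nth atLeast0LessThan)
  ultimately show ?thesis
    unfolding affine_readout_def by (intro exI[of _ c] exI[of _ "\<lambda>i. D (ps ! i)"]) simp
qed

section \<open>Deep sampled networks\<close>

lemma hid_nonneg: "0 \<le> hid N W1 W b l x j"
  by (cases "(N, W1, W, b, l, x, j)" rule: hid.cases) auto

lemma hid_cong:
  assumes "\<forall>i\<le>l. W' i = W i" and "\<forall>i\<le>l. b' i = b i" and "\<forall>i<l. N' i = N i"
  shows "hid N' W1 W' b' l x j = hid N W1 W b l x j"
  using assms by (induction N W1 W b l x j rule: hid.induct) simp_all

definition sampled_layer :: "'a set \<Rightarrow> nat \<Rightarrow> ('a \<Rightarrow> nat \<Rightarrow> real) \<Rightarrow> nat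
    \<Rightarrow> (nat \<Rightarrow> nat \<Rightarrow> real) \<Rightarrow> (nat \<Rightarrow> real) \<Rightarrow> bool" where
  "sampled_layer X n V m Wl bl \<longleftrightarrow> (\<forall>i<m. \<exists>x1\<in>X. \<exists>x2\<in>X. (\<exists>j<n. V x1 j \<noteq> V x2 j) \<and>
      (\<forall>j<n. Wl i j = (V x2 j - V x1 j) / (\<Sum>k<n. (V x2 k - V x1 k)\<^sup>2)) \<and>
      bl i = (\<Sum>j<n. Wl i j * V x1 j))"

lemma sampled_Suc:
  assumes "1 \<le> L"
  shows "sampled X (Suc L) N W1 W b \<longleftrightarrow> sampled X L N W1 W b \<and>
           sampled_layer X (N L) (hid N W1 W b L) (N (Suc L)) (W (Suc L)) (b (Suc L))"
proof -
  have "{2..Suc L} = insert (Suc L) {2..L}" using assms by auto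
  then show ?thesis using assms by (auto simp: sampled_def sampled_layer_def)
qed

lemma sampled_cong:
  assumes "\<forall>l\<le>L. N' l = N l" and "\<forall>l\<le>L. W' l = W l" and "\<forall>l\<le>L. b' l = b l"
  shows "sampled X L N' W1 W' b' \<longleftrightarrow> sampled X L N W1 W b"
  using assms
proof (induction L)
  case 0
  then show ?case by (simp add: sampled_def)
next
  case (Suc L)
  show ?case
  proof (cases "L = 0")
    case True
    then show ?thesis using Suc.prems by (simp add: sampled_def)
  next
    case False
    have "hid N' W1 W' b' L = hid N W1 W b L" using Suc.prems by (intro ext hid_cong) auto
    then show ?thesis using Suc False by (simp add: sampled_Suc)
  qed
qed

lemma sampled_layer_anchored:
  assumes "z \<in> X" and "\<forall>j<n. V z j = 0" and "\<forall>i<m. u i \<in> X \<and> (\<exists>j<n. V (u i) j \<noteq> 0)"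
  shows "sampled_layer X n V m (\<lambda>i j. V (u i) j / dot n (V (u i)) (V (u i))) (\<lambda>i. 0)"
  unfolding sampled_layer_def
proof (intro allI impI)
  fix i assume "i < m"
  then have "u i \<in> X" "\<exists>j<n. V z j \<noteq> V (u i) j" using assms(2,3) by force+
  moreover have "(\<Sum>k<n. (V (u i) k - V z k)\<^sup>2) = dot n (V (u i)) (V (u i))"
    using assms(2) by (simp add: dot_def power2_eq_square)
  ultimately show "\<exists>x1\<in>X. \<exists>x2\<in>X. (\<exists>j<n. V x1 j \<noteq> V x2 j) \<and>
      (\<forall>j<n. V (u i) j / dot n (V (u i)) (V (u i)) = (V x2 j - V x1 j) / (\<Sum>k<n. (V x2 k - V x1 k)\<^sup>2)) \<and>
      0 = (\<Sum>j<n. V (u i) j / dot n (V (u i)) (V (u i)) * V x1 j)"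
    using assms(1,2) by (intro bexI[of _ z] bexI[of _ "u i"]) auto
qed

definition anchored_realization :: "'a::euclidean_space set \<Rightarrow> 'a \<Rightarrow> nat \<Rightarrow> ('k \<Rightarrow> 'a \<Rightarrow> real) \<Rightarrow> bool" where
  "anchored_realization X z L G \<longleftrightarrow> (\<exists>N W1 W b. (\<forall>l\<in>{1..L}. 0 < N l) \<and> sampled X L N W1 W b \<and>
     (\<forall>j<N L. hid N W1 W b L z j = 0) \<and> (\<exists>x\<in>X. \<exists>j<N L. hid N W1 W b L x j \<noteq> 0) \<and>
     (\<forall>k. affine_readout X (hid N W1 W b L) {..<N L} (G k)))"

lemma anchored_realization_first_layer:
  fixes G :: "'k \<Rightarrow> 'a::euclidean_space \<Rightarrow> real" and P :: "('a \<times> 'a) set"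
  assumes "finite P"
    and anchored: "\<And>x1 x2. (x1, x2) \<in> P \<Longrightarrow> x1 \<in> X \<and> x2 \<in> X \<and> x1 \<noteq> x2 \<and> sampled_relu x1 x2 z = 0"
    and active: "(p1, p2) \<in> P" "x \<in> X" "sampled_relu p1 p2 x \<noteq> 0"
    and readout: "\<And>k. affine_readout X relu_features P (G k)"
  shows "anchored_realization X z 1 G"
proof -
  obtain ps where ps: "set ps = P" "distinct ps" using finite_distinct_list[OF \<open>finite P\<close>] by blast
  define N :: "nat \<Rightarrow> nat" where "N = (\<lambda>_. length ps)"
  have N_eq: "N l = length ps" for l by (simp add: N_def)
  define W1 where "W1 i = (1 / (norm (snd (ps!i) - fst (ps!i)))\<^sup>2) *\<^sub>R (snd (ps!i) - fst (ps!i))" for i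
  define b :: "nat \<Rightarrow> nat \<Rightarrow> real" where "b l i = W1 i \<bullet> fst (ps!i)" for l i
  define W :: "nat \<Rightarrow> nat \<Rightarrow> nat \<Rightarrow> real" where "W = (\<lambda>_ _ _. 0)"
  have hid1: "hid N W1 W b 1 = (\<lambda>x i. sampled_relu (fst (ps ! i)) (snd (ps ! i)) x)"
    by (intro ext) (simp add: W1_def b_def sampled_relu_def inner_diff_right)
  have pair: "fst (ps ! i) \<in> X \<and> snd (ps ! i) \<in> X \<and> fst (ps ! i) \<noteq> snd (ps ! i) \<and>
      sampled_relu (fst (ps ! i)) (snd (ps ! i)) z = 0" if "i < length ps" for i
    using anchored[of "fst (ps ! i)" "snd (ps ! i)"] nth_mem[OF that] ps(1) by simp
  obtain i where "i < length ps" "ps ! i = (p1, p2)" using active(1) ps(1) by (metis in_set_conv_nth)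
  then have "0 < length ps" by linarith
  show ?thesis
    unfolding anchored_realization_def
  proof (intro exI[of _ N] exI[of _ W1] exI[of _ W] exI[of _ b] conjI)
    show "\<forall>l\<in>{1..1}. 0 < N l" using \<open>0 < length ps\<close> by (simp add: N_eq)
    show "sampled X 1 N W1 W b"
      unfolding sampled_def using pair by (auto simp: N_eq W1_def b_def)
    show "\<forall>j<N 1. hid N W1 W b 1 z j = 0"
      unfolding hid1 using pair by (simp add: N_eq)
    show "\<exists>x\<in>X. \<exists>j<N 1. hid N W1 W b 1 x j \<noteq> 0"
      unfolding hid1 using active \<open>i < length ps\<close> \<open>ps ! i = (p1, p2)\<close>
      by (intro bexI[of _ x] exI[of _ i]) (simp_all add: N_eq)
    show "\<forall>k. affine_readout X (hid N W1 W b 1) {..<N 1} (G k)"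
      unfolding hid1 N_eq using affine_readout_nth[OF readout[folded ps(1)] ps(2)] by (simp add: relu_features_def)
  qed
qed

lemma affine_readout_gram:
  assumes "affine_readout X V {..<n} h"
    and gram: "\<And>d. \<exists>c. \<forall>x\<in>X. dot n d (V x) = (\<Sum>y\<in>Y. c y * dot n (V y) (V x))"
    and pos: "\<And>y. y \<in> Y \<Longrightarrow> 0 < dot n (V y) (V y)"
  shows "affine_readout X (\<lambda>x y. dot n (V y) (V x) / dot n (V y) (V y)) Y h"
proof -
  obtain c D where "\<forall>x\<in>X. h x = c + dot n D (V x)"
    using assms(1) unfolding affine_readout_def by (auto simp: dot_def mult.commute)
  moreover obtain e where "\<forall>x\<in>X. dot n D (V x) = (\<Sum>y\<in>Y. e y * dot n (V y) (V x))"
    using gram by blast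
  moreover have "(\<Sum>y\<in>Y. e y * dot n (V y) (V x)) =
      (\<Sum>y\<in>Y. (e y * dot n (V y) (V y)) * (dot n (V y) (V x) / dot n (V y) (V y)))" for x
    using pos by (intro sum.cong) (simp_all add: less_imp_neq[symmetric])
  ultimately show ?thesis
    unfolding affine_readout_def by (intro exI[of _ c] exI[of _ "\<lambda>y. e y * dot n (V y) (V y)"]) simp
qed

lemma sampled_anchored_extension:
  assumes "z \<in> X" and "1 \<le> L" and "sampled X L N W1 W b" and "\<forall>j<N L. hid N W1 W b L z j = 0"
    and "\<forall>i<m. u i \<in> X \<and> (\<exists>j<N L. hid N W1 W b L (u i) j \<noteq> 0)"
  defines "V \<equiv> hid N W1 W b L"
  defines "N' \<equiv> N(Suc L := m)" and "W' \<equiv> W(Suc L := (\<lambda>i j. V (u i) j / dot (N L) (V (u i)) (V (u i))))"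
    and "b' \<equiv> b(Suc L := (\<lambda>i. 0))"
  shows "sampled X (Suc L) N' W1 W' b'"
    and "hid N' W1 W' b' (Suc L) = (\<lambda>x i. dot (N L) (V (u i)) (V x) / dot (N L) (V (u i)) (V (u i)))"
proof -
  have old: "hid N' W1 W' b' L = V"
    unfolding V_def by (intro ext hid_cong) (auto simp: N'_def W'_def b'_def)
  have "sampled X L N' W1 W' b'"
    using assms(3) by (subst sampled_cong) (auto simp: N'_def W'_def b'_def)
  moreover have "sampled_layer X (N L) V m (W' (Suc L)) (b' (Suc L))"
    unfolding W'_def b'_def using assms(1,4,5) by (simp add: sampled_layer_anchored V_def)
  ultimately show "sampled X (Suc L) N' W1 W' b'"
    using assms(2) old by (simp add: sampled_Suc N'_def)
  show "hid N' W1 W' b' (Suc L) = (\<lambda>x i. dot (N L) (V (u i)) (V x) / dot (N L) (V (u i)) (V (u i)))"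
  proof (intro ext)
    fix x i
    obtain l where "L = Suc l" using assms(2) by (cases L) auto
    then have "hid N' W1 W' b' (Suc L) x i
        = max (\<Sum>j<N L. V (u i) j / dot (N L) (V (u i)) (V (u i)) * V x j) 0"
      using old by (simp add: N'_def W'_def b'_def)
    also have "\<dots> = dot (N L) (V (u i)) (V x) / dot (N L) (V (u i)) (V (u i))"
      using hid_nonneg[of N W1 W b L]
      by (simp add: dot_def sum_divide_distrib V_def sum_nonneg divide_nonneg_nonneg)
    finally show "hid N' W1 W' b' (Suc L) x i = dot (N L) (V (u i)) (V x) / dot (N L) (V (u i)) (V (u i))" .
  qed
qed

lemma anchored_realization_Suc:
  assumes "z \<in> X" and "1 \<le> L" and "anchored_realization X z L G"
  shows "anchored_realization X z (Suc L) G"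
proof -
  obtain N W1 W b where net: "\<forall>l\<in>{1..L}. 0 < N l" "sampled X L N W1 W b"
      "\<forall>j<N L. hid N W1 W b L z j = 0" "\<exists>x\<in>X. \<exists>j<N L. hid N W1 W b L x j \<noteq> 0"
      "\<forall>k. affine_readout X (hid N W1 W b L) {..<N L} (G k)"
    using assms(3) unfolding anchored_realization_def by blast
  define n where "n = N L"
  define V where "V = hid N W1 W b L"
  obtain Y where Y: "finite Y" "Y \<subseteq> X" "\<forall>y\<in>Y. \<exists>j<n. V y j \<noteq> 0"
      "\<forall>d. \<exists>c. \<forall>x\<in>X. dot n d (V x) = (\<Sum>y\<in>Y. c y * dot n (V y) (V x))"
    using linear_functional_gram_repr[where A = X and V = V and n = n] by blast
  have pos: "0 < dot n (V y) (V y)" if "y \<in> Y" for y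
    using that Y(3) dot_self_pos by blast
  obtain x where "x \<in> X" "\<exists>j<n. V x j \<noteq> 0" using net(4) by (auto simp: n_def V_def)
  moreover obtain c where "dot n (V x) (V x) = (\<Sum>y\<in>Y. c y * dot n (V y) (V x))"
    using Y(4) \<open>x \<in> X\<close> by blast
  ultimately have "Y \<noteq> {}" using dot_self_pos[of _ n "V x"] by auto
  obtain ys where ys: "set ys = Y" "distinct ys" using finite_distinct_list[OF Y(1)] by blast
  have "0 < length ys" using \<open>Y \<noteq> {}\<close> ys(1) by auto
  have ys_Y: "ys ! i \<in> Y" if "i < length ys" for i using that ys(1) by auto
  define N' where "N' = N(Suc L := length ys)"
  have "N' (Suc L) = length ys" by (simp add: N'_def)
  define W' where "W' = W(Suc L := (\<lambda>i j. V (ys ! i) j / dot n (V (ys ! i)) (V (ys ! i))))"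
  define b' where "b' = b(Suc L := (\<lambda>i. 0))"
  have "\<forall>i<length ys. ys ! i \<in> X \<and> (\<exists>j<N L. hid N W1 W b L (ys ! i) j \<noteq> 0)"
    using ys_Y Y(2,3) by (auto simp: n_def V_def)
  note extension = sampled_anchored_extension[OF assms(1,2) net(2,3) this, folded V_def n_def,
      folded N'_def W'_def b'_def]
  show ?thesis
    unfolding anchored_realization_def
  proof (intro exI[of _ N'] exI[of _ W1] exI[of _ W'] exI[of _ b'] conjI)
    show "\<forall>l\<in>{1..Suc L}. 0 < N' l"
      using net(1) \<open>0 < length ys\<close> by (auto simp: N'_def le_Suc_eq)
    show "sampled X (Suc L) N' W1 W' b'" by (fact extension(1))
    show "\<forall>j<N' (Suc L). hid N' W1 W' b' (Suc L) z j = 0"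
      using net(3) by (simp add: extension(2) dot_def V_def n_def)
    have "hid N' W1 W' b' (Suc L) (ys ! 0) 0 = 1"
      using pos[OF ys_Y[OF \<open>0 < length ys\<close>]] by (simp add: extension(2))
    then show "\<exists>x\<in>X. \<exists>j<N' (Suc L). hid N' W1 W' b' (Suc L) x j \<noteq> 0"
      using \<open>0 < length ys\<close> ys_Y Y(2) \<open>N' (Suc L) = length ys\<close> by force
    show "\<forall>k. affine_readout X (hid N' W1 W' b' (Suc L)) {..<N' (Suc L)} (G k)"
    proof
      fix k
      have "affine_readout X (\<lambda>x y. dot n (V y) (V x) / dot n (V y) (V y)) (set ys) (G k)"
        using net(5) Y(4) pos unfolding ys(1) n_def V_def by (intro affine_readout_gram) auto
      from affine_readout_nth[OF this ys(2)]
      show "affine_readout X (hid N' W1 W' b' (Suc L)) {..<N' (Suc L)} (G k)"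
        unfolding extension(2) \<open>N' (Suc L) = length ys\<close> .
    qed
  qed
qed

lemma anchored_realization_deep:
  assumes "z \<in> X" and "1 \<le> L" and "anchored_realization X z 1 G"
  shows "anchored_realization X z L G"
  using assms(2)
proof (induction L rule: dec_induct)
  case base
  then show ?case using assms(3) .
next
  case (step L)
  then show ?case using anchored_realization_Suc[OF assms(1)] by simp
qed

section \<open>Shallow sampled networks on a regular compact domain\<close>

locale anchored_domain =
  fixes X :: "'a::euclidean_space set" and z :: 'a
  assumes compact: "compact X" and regular: "X \<subseteq> closure (interior X)" and anchor: "z \<in> interior X"
begin

definition anchored_pair :: "'a \<times> 'a \<Rightarrow> bool" where
  "anchored_pair p \<longleftrightarrow> fst p \<in> X \<and> snd p \<in> X \<and> fst p \<noteq> snd p \<and> sampled_relu (fst p) (snd p) z = 0"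

definition shallow_nets :: "('a \<Rightarrow> real) set" where
  "shallow_nets = {h. \<exists>P. finite P \<and> Ball P anchored_pair \<and> affine_readout X relu_features P h}"

lemma shallow_nets_const: "(\<lambda>x. c) \<in> shallow_nets"
  unfolding shallow_nets_def by (intro CollectI exI[of _ "{}"]) (simp add: affine_readout_const)

lemma shallow_nets_neuron:
  assumes "anchored_pair (x1, x2)"
  shows "sampled_relu x1 x2 \<in> shallow_nets"
proof -
  have "affine_readout X relu_features {(x1, x2)} (\<lambda>x. relu_features x (x1, x2))"
    by (rule affine_readout_feature) auto
  then show ?thesis
    unfolding shallow_nets_def using assms by (intro CollectI exI[of _ "{(x1, x2)}"]) (simp add: relu_features_def)
qed

lemma shallow_nets_add:
  assumes "f \<in> shallow_nets" and "g \<in> shallow_nets"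
  shows "(\<lambda>x. f x + g x) \<in> shallow_nets"
proof -
  obtain P where P: "finite P" "Ball P anchored_pair" "affine_readout X relu_features P f"
    using assms(1) unfolding shallow_nets_def by blast
  obtain Q where Q: "finite Q" "Ball Q anchored_pair" "affine_readout X relu_features Q g"
    using assms(2) unfolding shallow_nets_def by blast
  have "affine_readout X relu_features (P \<union> Q) (\<lambda>x. f x + g x)"
    using P Q by (intro affine_readout_add affine_readout_mono[of X _ _ _ "P \<union> Q"]) auto
  then show ?thesis unfolding shallow_nets_def using P Q by auto
qed

lemma shallow_nets_scale:
  assumes "f \<in> shallow_nets"
  shows "(\<lambda>x. r * f x) \<in> shallow_nets"
proof -
  obtain P where "finite P" "Ball P anchored_pair" "affine_readout X relu_features P f"
    using assms unfolding shallow_nets_def by blast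
  then show ?thesis unfolding shallow_nets_def by (blast intro: affine_readout_scale)
qed

lemma shallow_nets_diff: "f \<in> shallow_nets \<Longrightarrow> g \<in> shallow_nets \<Longrightarrow> (\<lambda>x. f x - g x) \<in> shallow_nets"
  using shallow_nets_add[of f "\<lambda>x. (-1) * g x"] shallow_nets_scale[of g "-1"] by simp

lemma interior_symmetric_segment:
  assumes "y \<in> interior X" and "a \<noteq> 0"
  obtains t where "0 < t" and "y + t *\<^sub>R a \<in> X" and "y + t *\<^sub>R (-a) \<in> X"
proof -
  obtain r where "0 < r" "ball y r \<subseteq> X"
    using openE[OF open_interior assms(1)] interior_subset by (metis order_trans)
  define t where "t = r / (2 * norm a)"
  have "0 < t" "norm (t *\<^sub>R a) < r" using \<open>0 < r\<close> assms(2) by (auto simp: t_def)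
  then have "y + t *\<^sub>R a \<in> ball y r" "y + t *\<^sub>R (-a) \<in> ball y r" by (auto simp: dist_norm)
  then show ?thesis using that \<open>0 < t\<close> \<open>ball y r \<subseteq> X\<close> by blast
qed

lemma shallow_nets_inner: "(\<lambda>x. a \<bullet> (x - z)) \<in> shallow_nets"
proof (cases "a = 0")
  case True
  then show ?thesis using shallow_nets_const[of 0] by simp
next
  case False
  obtain t where t: "0 < t" "z + t *\<^sub>R a \<in> X" "z + t *\<^sub>R (-a) \<in> X"
    using interior_symmetric_segment[OF anchor False] by blast
  have "z \<in> X" using anchor interior_subset by blast
  have "anchored_pair (z, z + t *\<^sub>R a)" "anchored_pair (z, z + t *\<^sub>R (-a))"
    using t False \<open>z \<in> X\<close> by (simp_all add: anchored_pair_def sampled_relu_along del: scaleR_minus_right)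
  moreover have "a \<bullet> (x - z) = (t * (norm a)\<^sup>2) * sampled_relu z (z + t *\<^sub>R a) x
      - (t * (norm a)\<^sup>2) * sampled_relu z (z + t *\<^sub>R (-a)) x" for x
    using t False by (simp add: sampled_relu_along max_def del: scaleR_minus_right)
  ultimately show ?thesis
    by (simp only:) (intro shallow_nets_diff shallow_nets_scale shallow_nets_neuron)
qed

lemma shallow_nets_ramp:
  assumes "y \<in> interior X"
  shows "(\<lambda>x. max (a \<bullet> (x - y)) 0) \<in> shallow_nets"
proof (cases "a = 0")
  case True
  then show ?thesis using shallow_nets_const[of 0] by simp
next
  case False
  obtain t where t: "0 < t" "y + t *\<^sub>R a \<in> X" "y + t *\<^sub>R (-a) \<in> X"
    using interior_symmetric_segment[OF assms False] by blast
  have "y \<in> X" using assms interior_subset by blast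
  have scale: "(t * (norm a)\<^sup>2) * sampled_relu y (y + t *\<^sub>R b) x = max (b \<bullet> (x - y)) 0"
    if "b \<noteq> 0" "norm b = norm a" for b x
    using t(1) that by (simp add: sampled_relu_along flip: that(2))
  show ?thesis
  proof (cases "a \<bullet> (z - y) \<le> 0")
    case True
    then have "anchored_pair (y, y + t *\<^sub>R a)"
      using t False \<open>y \<in> X\<close> by (simp add: anchored_pair_def sampled_relu_along max_def)
    then show ?thesis
      using scale[OF False refl, symmetric] by (simp only:) (intro shallow_nets_scale shallow_nets_neuron)
  next
    case False
    \<comment> \<open>The ramp is active at the anchor, so it is realised through the reflected ramp plus an affine part.\<close>
    then have "anchored_pair (y, y + t *\<^sub>R (-a))"
      using t \<open>a \<noteq> 0\<close> \<open>y \<in> X\<close>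
      by (simp add: anchored_pair_def sampled_relu_along max_def del: scaleR_minus_right)
    moreover have "max (a \<bullet> (x - y)) 0
        = (t * (norm a)\<^sup>2) * sampled_relu y (y + t *\<^sub>R (-a)) x + a \<bullet> (x - z) + a \<bullet> (z - y)" for x
      using scale[of "-a" x] \<open>a \<noteq> 0\<close> by (simp add: max_def inner_diff_right del: scaleR_minus_right)
    ultimately show ?thesis
      by (simp only:) (intro shallow_nets_add shallow_nets_scale shallow_nets_neuron shallow_nets_inner
          shallow_nets_const)
  qed
qed

lemma shallow_nets_relu_comb:
  assumes "snd ` set ps \<subseteq> (\<lambda>y. a \<bullet> y) ` interior X"
  shows "(\<lambda>x. relu_comb C ps (a \<bullet> x)) \<in> shallow_nets"
  using assms
proof (induction ps)
  case Nil
  then show ?case by (simp add: shallow_nets_const)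
next
  case (Cons cp ps)
  obtain y where "snd cp = a \<bullet> y" "y \<in> interior X" using Cons.prems by auto
  moreover have "relu_comb C (cp # ps) t = fst cp * max (t - snd cp) 0 + relu_comb C ps t" for t
    by (cases cp) (simp add: relu_comb_def)
  ultimately show ?case
    using Cons by (simp add: inner_diff_right[symmetric] shallow_nets_add shallow_nets_scale shallow_nets_ramp)
qed

lemma finite_interior_net:
  assumes "0 < r"
  obtains Y where "Y \<subseteq> interior X" and "finite Y" and "X \<subseteq> (\<Union>y\<in>Y. ball y r)" and "Y \<noteq> {}"
proof -
  have "X \<subseteq> (\<Union>y\<in>interior X. ball y r)"
  proof
    fix x assume "x \<in> X"
    then have "x \<in> closure (interior X)" using regular by blast
    then obtain y where "y \<in> interior X" "dist y x < r"
      using assms unfolding closure_approachable by blast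
    then show "x \<in> (\<Union>y\<in>interior X. ball y r)" by auto
  qed
  then obtain Y where "Y \<subseteq> interior X" "finite Y" "X \<subseteq> (\<Union>y\<in>Y. ball y r)"
    using compactE_image[OF compact, of "interior X" "\<lambda>y. ball y r"] by blast
  moreover have "Y \<noteq> {}" using calculation(3) anchor interior_subset by fastforce
  ultimately show ?thesis using that by blast
qed

lemma ridge_approx:
  assumes lip: "\<And>s t. \<bar>g s - g t\<bar> \<le> K * \<bar>s - t\<bar>" and "0 < \<epsilon>"
  shows "\<exists>h\<in>shallow_nets. \<forall>x\<in>X. \<bar>h x - g (a \<bullet> x)\<bar> \<le> \<epsilon>"
proof (cases "a = 0")
  case True
  then show ?thesis using \<open>0 < \<epsilon>\<close> by (intro bexI[OF _ shallow_nets_const[of "g 0"]]) simp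
next
  case False
  have "0 \<le> K" using lip[of 1 0] by simp
  define r where "r = \<epsilon> / ((2 * K + 1) * norm a)"
  have "0 < r" using \<open>0 < \<epsilon>\<close> \<open>0 \<le> K\<close> False by (simp add: r_def)
  obtain Y where Y: "Y \<subseteq> interior X" "finite Y" "X \<subseteq> (\<Union>y\<in>Y. ball y r)" "Y \<noteq> {}"
    using finite_interior_net[OF \<open>0 < r\<close>] by blast
  obtain C ps where ps: "snd ` set ps \<subseteq> (\<lambda>y. a \<bullet> y) ` Y"
      "\<forall>q\<in>(\<lambda>y. a \<bullet> y) ` Y. relu_comb C ps q = g q"
      "\<forall>s t. \<bar>relu_comb C ps s - relu_comb C ps t\<bar> \<le> K * \<bar>s - t\<bar>"
    using relu_comb_interpolant[of "(\<lambda>y. a \<bullet> y) ` Y" g K] Y(2,4) lip by blast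
  have "(\<lambda>x. relu_comb C ps (a \<bullet> x)) \<in> shallow_nets"
    using ps(1) Y(1) by (intro shallow_nets_relu_comb) auto
  moreover have "\<bar>relu_comb C ps (a \<bullet> x) - g (a \<bullet> x)\<bar> \<le> \<epsilon>" if "x \<in> X" for x
  proof -
    obtain y where "y \<in> Y" "dist y x < r" using Y(3) \<open>x \<in> X\<close> by auto
    have "\<bar>a \<bullet> x - a \<bullet> y\<bar> \<le> norm a * dist x y"
      using Cauchy_Schwarz_ineq2[of a "x - y"] by (simp add: inner_diff_right dist_norm)
    also have "\<dots> \<le> norm a * r"
      using \<open>dist y x < r\<close> by (intro mult_left_mono) (simp_all add: dist_commute)
    finally have "\<bar>a \<bullet> x - a \<bullet> y\<bar> \<le> norm a * r" .
    have "\<bar>relu_comb C ps (a \<bullet> x) - g (a \<bullet> x)\<bar>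
        \<le> \<bar>relu_comb C ps (a \<bullet> x) - relu_comb C ps (a \<bullet> y)\<bar> + \<bar>g (a \<bullet> y) - g (a \<bullet> x)\<bar>"
      using ps(2) \<open>y \<in> Y\<close> by simp
    also have "\<dots> \<le> 2 * K * \<bar>a \<bullet> x - a \<bullet> y\<bar>"
      using ps(3)[rule_format, of "a \<bullet> x" "a \<bullet> y"] lip[of "a \<bullet> y" "a \<bullet> x"]
      by (simp add: abs_minus_commute)
    also have "\<dots> \<le> 2 * K * (norm a * r)"
      using \<open>\<bar>a \<bullet> x - a \<bullet> y\<bar> \<le> norm a * r\<close> \<open>0 \<le> K\<close> by (simp add: mult_left_mono)
    also have "\<dots> = 2 * K * \<epsilon> / (2 * K + 1)"
      using False by (simp add: r_def)
    also have "\<dots> \<le> \<epsilon>"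
      using \<open>0 \<le> K\<close> \<open>0 < \<epsilon>\<close> by (simp add: divide_le_eq algebra_simps)
    finally show ?thesis .
  qed
  ultimately show ?thesis by (intro bexI[of _ "\<lambda>x. relu_comb C ps (a \<bullet> x)"]) auto
qed

lemma exp_inner_approx:
  assumes "0 < \<epsilon>"
  shows "\<exists>h\<in>shallow_nets. \<forall>x\<in>X. \<bar>h x - exp (a \<bullet> x)\<bar> \<le> \<epsilon>"
proof -
  obtain B where B: "\<forall>x\<in>X. norm x \<le> B"
    using compact compact_imp_bounded bounded_iff by metis
  define H where "H = norm a * B"
  have "a \<bullet> x \<le> H" if "x \<in> X" for x
  proof -
    have "a \<bullet> x \<le> norm a * norm x" using Cauchy_Schwarz_ineq2[of a x] by simp
    also have "\<dots> \<le> H" using B that by (simp add: H_def mult_left_mono)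
    finally show ?thesis .
  qed
  moreover obtain h where "h \<in> shallow_nets" "\<forall>x\<in>X. \<bar>h x - exp (min (a \<bullet> x) H)\<bar> \<le> \<epsilon>"
    using ridge_approx[of "\<lambda>s. exp (min s H)" "exp H", OF exp_min_lipschitz assms] by blast
  ultimately show ?thesis by (metis min.absorb1)
qed

lemma exp_sums_approx:
  assumes "f \<in> exp_sums" and "0 < \<epsilon>"
  shows "\<exists>h\<in>shallow_nets. \<forall>x\<in>X. \<bar>f x - h x\<bar> < \<epsilon>"
  using assms
proof (induction arbitrary: \<epsilon>)
  case (exp_inner a)
  obtain h where "h \<in> shallow_nets" "\<forall>x\<in>X. \<bar>h x - exp (a \<bullet> x)\<bar> \<le> \<epsilon> / 2"
    using exp_inner_approx[of "\<epsilon> / 2" a] exp_inner.prems by auto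
  then show ?case using exp_inner.prems by (intro bexI[of _ h]) (auto simp: abs_minus_commute)
next
  case (add f g)
  obtain h\<^sub>f h\<^sub>g where "h\<^sub>f \<in> shallow_nets" "\<forall>x\<in>X. \<bar>f x - h\<^sub>f x\<bar> < \<epsilon> / 2"
      "h\<^sub>g \<in> shallow_nets" "\<forall>x\<in>X. \<bar>g x - h\<^sub>g x\<bar> < \<epsilon> / 2"
    using add.IH add.prems by (meson half_gt_zero)
  moreover have "\<bar>f x + g x - (h\<^sub>f x + h\<^sub>g x)\<bar> < \<epsilon>"
    if "\<bar>f x - h\<^sub>f x\<bar> < \<epsilon> / 2" "\<bar>g x - h\<^sub>g x\<bar> < \<epsilon> / 2" for x
    using that abs_diff_triangle_ineq[of "f x" "g x" "h\<^sub>f x" "h\<^sub>g x"] by linarith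
  ultimately show ?case by (intro bexI[of _ "\<lambda>x. h\<^sub>f x + h\<^sub>g x"] shallow_nets_add) auto
next
  case (scale f c)
  define \<delta> where "\<delta> = \<epsilon> / (\<bar>c\<bar> + 1)"
  have "0 < \<delta>" using scale.prems by (simp add: \<delta>_def)
  then obtain h where "h \<in> shallow_nets" "\<forall>x\<in>X. \<bar>f x - h x\<bar> < \<delta>"
    using scale.IH by blast
  moreover have "\<bar>c * f x - c * h x\<bar> < \<epsilon>" if "\<bar>f x - h x\<bar> < \<delta>" for x
  proof -
    have "\<bar>c * f x - c * h x\<bar> = \<bar>c\<bar> * \<bar>f x - h x\<bar>" by (metis abs_mult right_diff_distrib)
    also have "\<dots> \<le> \<bar>c\<bar> * \<delta>" using that by (simp add: mult_left_mono)
    also have "\<dots> < \<epsilon>" using scale.prems by (simp add: \<delta>_def field_simps)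
    finally show ?thesis .
  qed
  ultimately show ?case by (intro bexI[of _ "\<lambda>x. c * h x"] shallow_nets_scale) auto
qed

lemma shallow_nets_dense:
  assumes "continuous_on X f" and "0 < \<epsilon>"
  shows "\<exists>h\<in>shallow_nets. \<forall>x\<in>X. \<bar>f x - h x\<bar> < \<epsilon>"
proof -
  interpret exp_sums_algebra: function_ring_on exp_sums X
  proof
    fix x y :: 'a assume "x \<noteq> y"
    then have "(x - y) \<bullet> x \<noteq> (x - y) \<bullet> y"
      by (metis inner_diff_right inner_eq_zero_iff right_minus_eq)
    then show "\<exists>f\<in>exp_sums. f x \<noteq> f y" by (intro bexI[OF _ exp_sums.exp_inner[of "x - y"]]) simp
  qed (auto intro: compact exp_sums_continuous_on exp_sums.add exp_sums_mult exp_sums_const)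
  obtain g where "g \<in> exp_sums" "\<forall>x\<in>X. \<bar>f x - g x\<bar> < \<epsilon> / 2"
    using exp_sums_algebra.Stone_Weierstrass_basic[OF assms(1), of "\<epsilon> / 2"] assms(2) by auto
  moreover obtain h where "h \<in> shallow_nets" "\<forall>x\<in>X. \<bar>g x - h x\<bar> < \<epsilon> / 2"
    using exp_sums_approx[OF \<open>g \<in> exp_sums\<close>, of "\<epsilon> / 2"] assms(2) by auto
  moreover have "\<bar>f x - h x\<bar> < \<epsilon>" if "\<bar>f x - g x\<bar> < \<epsilon> / 2" "\<bar>g x - h x\<bar> < \<epsilon> / 2" for x
    using that abs_triangle_ineq[of "f x - g x" "g x - h x"] by simp
  ultimately show ?thesis by (intro bexI[of _ h]) auto
qed

lemma anchored_realization_shallow: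
  fixes h :: "'k::finite \<Rightarrow> 'a \<Rightarrow> real"
  assumes "\<And>k. h k \<in> shallow_nets"
  shows "anchored_realization X z 1 h"
proof -
  have "\<forall>k. \<exists>P. finite P \<and> Ball P anchored_pair \<and> affine_readout X relu_features P (h k)"
    using assms by (simp add: shallow_nets_def)
  from choice[OF this] obtain P where P: "\<And>k. finite (P k)" "\<And>k. Ball (P k) anchored_pair"
      "\<And>k. affine_readout X relu_features (P k) (h k)"
    by blast
  obtain a :: 'a where "a \<in> Basis" using nonempty_Basis by blast
  then have "a \<noteq> 0" by auto
  obtain t where "0 < t" "z + t *\<^sub>R a \<in> X" using interior_symmetric_segment[OF anchor \<open>a \<noteq> 0\<close>] by blast
  have "z \<in> X" using anchor interior_subset by blast
  \<comment> \<open>One extra neuron that is not identically zero, needed to seed the deeper layers.\<close>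
  have seed: "anchored_pair (z, z + t *\<^sub>R a)" "sampled_relu z (z + t *\<^sub>R a) (z + t *\<^sub>R a) = 1"
    using \<open>0 < t\<close> \<open>a \<noteq> 0\<close> \<open>z \<in> X\<close> \<open>z + t *\<^sub>R a \<in> X\<close>
    by (simp_all add: anchored_pair_def sampled_relu_along power2_norm_eq_inner)
  define Q where "Q = insert (z, z + t *\<^sub>R a) (\<Union>k. P k)"
  have "finite Q" using P(1) by (simp add: Q_def)
  show ?thesis
  proof (rule anchored_realization_first_layer)
    show "finite Q" by fact
    show "x1 \<in> X \<and> x2 \<in> X \<and> x1 \<noteq> x2 \<and> sampled_relu x1 x2 z = 0" if "(x1, x2) \<in> Q" for x1 x2
      using that P(2) seed(1) unfolding Q_def anchored_pair_def by fastforce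
    show "(z, z + t *\<^sub>R a) \<in> Q" "z + t *\<^sub>R a \<in> X" "sampled_relu z (z + t *\<^sub>R a) (z + t *\<^sub>R a) \<noteq> 0"
      using seed(2) \<open>z + t *\<^sub>R a \<in> X\<close> by (simp_all add: Q_def)
    show "affine_readout X relu_features Q (h k)" for k
      using \<open>finite Q\<close> by (intro affine_readout_mono[OF P(3)]) (auto simp: Q_def)
  qed
qed

end

section \<open>Tubular neighbourhoods\<close>

lemma anchored_domain_thickening:
  fixes X' :: "'a::euclidean_space set"
  assumes "compact X'" and "z \<in> X'" and "0 < e"
  shows "anchored_domain {x. infdist x X' \<le> e} z"
proof
  define T where "T = {x. infdist x X' \<le> e}"
  have "open {x. infdist x X' < e}"
    by (intro open_Collect_less continuous_intros)
  then have core: "{x. infdist x X' < e} \<subseteq> interior T"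
    by (intro interior_maximal) (auto simp: T_def)
  show "compact T"
    using compact_infdist_le[OF _ assms(1,3)] assms(2) by (auto simp: T_def)
  show "z \<in> interior T"
    using core assms(2,3) by (auto simp: in_closed_iff_infdist_zero)
  show "T \<subseteq> closure (interior T)"
  proof
    fix x assume "x \<in> T"
    obtain q where "q \<in> X'" "infdist x X' = dist x q"
      using infdist_attains_inf[OF compact_imp_closed[OF assms(1)]] assms(2) by blast
    have "open_segment q x \<subseteq> {x. infdist x X' < e}"
    proof
      fix y assume "y \<in> open_segment q x"
      then have "dist y q < dist q x" using dist_in_open_segment by blast
      moreover have "dist q x \<le> e" using \<open>x \<in> T\<close> \<open>infdist x X' = dist x q\<close> by (simp add: T_def dist_commute)
      ultimately show "y \<in> {x. infdist x X' < e}" using infdist_le[OF \<open>q \<in> X'\<close>, of y] by simp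
    qed
    then have "closure (open_segment q x) \<subseteq> closure (interior T)"
      using core by (intro closure_mono) blast
    moreover have "x \<in> interior T" if "x = q"
      using that core \<open>q \<in> X'\<close> assms(3) by (auto simp: in_closed_iff_infdist_zero)
    ultimately show "x \<in> closure (interior T)"
      using closure_subset by (cases "x = q") auto
  qed
qed

lemma net_out_approx:
  fixes f :: "'a::euclidean_space \<Rightarrow> real ^ 'm::finite" and h :: "'m \<Rightarrow> 'a \<Rightarrow> real"
  assumes "anchored_realization X z L h" and "\<And>k x. x \<in> X \<Longrightarrow> \<bar>f x $ k - h k x\<bar> < \<epsilon> / CARD('m)"
  shows "\<exists>N W1 W b Wout bout. (\<forall>l\<in>{1..L}. 0 < N l) \<and> sampled X L N W1 W b \<and>
           (\<forall>x\<in>X. norm (f x - net_out L N W1 W b Wout bout x) < \<epsilon>)"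
proof -
  obtain N W1 W b where net: "\<forall>l\<in>{1..L}. 0 < N l" "sampled X L N W1 W b"
      "\<forall>k. affine_readout X (hid N W1 W b L) {..<N L} (h k)"
    using assms(1) unfolding anchored_realization_def by blast
  obtain c D where cD: "\<And>k x. x \<in> X \<Longrightarrow> h k x = c k + (\<Sum>j<N L. D k j * hid N W1 W b L x j)"
    using net(3) unfolding affine_readout_def by metis
  define bout :: "real ^ 'm" where "bout = - (\<chi> k. c k)"
  have "norm (f x - net_out L N W1 W b D bout x) < \<epsilon>" if "x \<in> X" for x
  proof -
    have "f x - net_out L N W1 W b D bout x = (\<chi> k. f x $ k - h k x)"
      using cD[OF that] by (simp add: vec_eq_iff net_out_def bout_def algebra_simps)
    then have "norm (f x - net_out L N W1 W b D bout x) \<le> (\<Sum>k\<in>UNIV. \<bar>f x $ k - h k x\<bar>)"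
      using norm_le_l1_cart[of "\<chi> k. f x $ k - h k x"] by simp
    also have "\<dots> < (\<Sum>k\<in>(UNIV::'m set). \<epsilon> / CARD('m))"
      using assms(2)[OF that] by (intro sum_strict_mono) auto
    also have "\<dots> = \<epsilon>" by simp
    finally show ?thesis .
  qed
  then show ?thesis using net(1,2) by blast
qed

theorem theorem1:
  fixes X' :: "'a::euclidean_space set" and epsI :: real and L :: nat
    and f :: "'a \<Rightarrow> real ^ 'm::finite" and \<epsilon> :: real
  assumes "compact X'" and "X' \<noteq> {}" and "reach X' > 0"
    and "0 < epsI" and "ereal epsI < reach X'" and "epsI < 1"
    and "L > 0"
    and "continuous_on {x. infdist x X' \<le> epsI} f"
    and "\<epsilon> > 0"
  shows "\<exists>N W1 W b Wout bout. (\<forall>l\<in>{1..L}. N l > 0) \<and>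
           sampled {x. infdist x X' \<le> epsI} L N W1 W b \<and>
           (\<forall>x\<in>{x. infdist x X' \<le> epsI}.
              norm (f x - net_out L N W1 W b Wout bout x) < \<epsilon>)"
proof -
  obtain z where "z \<in> X'" using assms(2) by blast
  interpret anchored_domain "{x. infdist x X' \<le> epsI}" z
    using anchored_domain_thickening[OF assms(1) \<open>z \<in> X'\<close> assms(4)] .
  have "\<forall>k. \<exists>h. h \<in> shallow_nets \<and>
      (\<forall>x\<in>{x. infdist x X' \<le> epsI}. \<bar>f x $ k - h x\<bar> < \<epsilon> / CARD('m))"
  proof
    fix k
    have "0 < \<epsilon> / CARD('m)" using assms(9) by simp
    from shallow_nets_dense[OF continuous_on_component[OF assms(8)] this]
    show "\<exists>h. h \<in> shallow_nets \<and> (\<forall>x\<in>{x. infdist x X' \<le> epsI}. \<bar>f x $ k - h x\<bar> < \<epsilon> / CARD('m))"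
      by blast
  qed
  from choice[OF this] obtain h where h: "\<And>k. h k \<in> shallow_nets"
      "\<And>k x. x \<in> {x. infdist x X' \<le> epsI} \<Longrightarrow> \<bar>f x $ k - h k x\<bar> < \<epsilon> / CARD('m)"
    by blast
  have "z \<in> {x. infdist x X' \<le> epsI}" using anchor interior_subset by blast
  moreover have "1 \<le> L" using assms(7) by simp
  ultimately have "anchored_realization {x. infdist x X' \<le> epsI} z L h"
    by (rule anchored_realization_deep[OF _ _ anchored_realization_shallow[OF h(1)]])
  from net_out_approx[OF this h(2)] show ?thesis by simp
qed

end
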